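(* Let $m>1$ be an integer that is not a prime power, with prime factorization $m=p_1^{e_1}p_2^{e_2}\cdots p_r^{e_r}$ ($r\ge 2$ distinct primes). There is a constant $c>0$ depending only on $m$ such that for every $n\ge 3$ the following holds. Let $X=\{x_{ij}\}$ be the $n\times n$ matrix whose entries are distinct indeterminates over $\mathbb{Z}_m$. Then there exist effectively computable constant $n\times t$ matrices $B$ and $C$ over $\mathbb{Z}_m$, where $$t\le \exp\Big(c\,\sqrt[r]{\log n\,(\log\log n)^{r-1}}\Big)\quad(\text{in particular } t=n^{o(1)}),$$ such that the $n\times n$ matrix $CB^TX$ is a 1-a-strong representation of the matrix $X$ modulo $m$. Moreover, every row of $CB^TX$ is a linear combination (with coefficients in $\mathbb{Z}_m$) of the rows of $X$.
   Context: $\mathbb{Z}_m$ denotes the ring of integers modulo $m=p_1^{e_1}\cdots p_\ell^{e_\ell}$. For polynomials $f=\sum_I a_I x_I$ and $g=\sum_I b_I x_I$ over $\mathbb{Z}_m$ (sums over monomials $x_I$), $g$ is an alternative representation of $f$ modulo $m$ if for every monomial $I$ there is some $j$ with $a_I\equiv b_I \pmod{p_j^{e_j}}$; $g$ is a 1-a-strong representation of $f$ modulo $m$ if it is an alternative representation and, whenever $a_I\not\equiv b_I\pmod{p_i^{e_i}}$ for some $i$, then $a_I\equiv 0\pmod m$. A matrix $D=\{d_{ij}\}$ whose entries are polynomials in the indeterminates $\{x_{ij}\}$ is a 1-a-strong representation of the matrix $X=\{x_{ij}\}$ modulo $m$ if for all $1\le i,j\le n$ the polynomial $d_{ij}$ is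 a 1-a-strong representation of the polynomial $x_{ij}$ modulo $m$. *)

theory Defs
  imports Complex_Main "HOL-Library.Poly_Mapping" "HOL-Computational_Algebra.Primes"
    "HOL-Number_Theory.Cong"
begin

text \<open>Monomials in the indeterminates x_ij (indexed by pairs (i,j)) and polynomials
  over Z_m, represented by their integer coefficient functions (coefficients are
  only compared modulo m and modulo the prime powers of m).\<close>

type_synonym mono = "(nat \<times> nat) \<Rightarrow>\<^sub>0 nat"
type_synonym zpoly = "mono \<Rightarrow> int"

definition ppow :: "nat \<Rightarrow> nat \<Rightarrow> int" where
  "ppow m p = int (p ^ multiplicity p m)"

definition alt_rep :: "nat \<Rightarrow> zpoly \<Rightarrow> zpoly \<Rightarrow> bool" where
  "alt_rep m g f \<longleftrightarrow> (\<forall>I. \<exists>p\<in>prime_factors m. [f I = g I] (mod ppow m p))"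

definition one_a_strong_rep :: "nat \<Rightarrow> zpoly \<Rightarrow> zpoly \<Rightarrow> bool" where
  "one_a_strong_rep m g f \<longleftrightarrow> alt_rep m g f \<and>
     (\<forall>I. (\<exists>p\<in>prime_factors m. \<not> [f I = g I] (mod ppow m p)) \<longrightarrow> [f I = 0] (mod int m))"

definition var :: "nat \<Rightarrow> nat \<Rightarrow> zpoly" where
  "var i j = (\<lambda>I. if I = Poly_Mapping.single (i, j) 1 then 1 else 0)"

definition CBtX :: "nat \<Rightarrow> nat \<Rightarrow> (nat \<Rightarrow> nat \<Rightarrow> int) \<Rightarrow> (nat \<Rightarrow> nat \<Rightarrow> int)
    \<Rightarrow> nat \<Rightarrow> nat \<Rightarrow> zpoly" where
  "CBtX n t C B i j = (\<lambda>I. \<Sum>k<n. (\<Sum>l<t. C i l * B k l) * var k j I)"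

definition matrix_one_a_strong_rep :: "nat \<Rightarrow> nat \<Rightarrow> (nat \<Rightarrow> nat \<Rightarrow> zpoly) \<Rightarrow> bool" where
  "matrix_one_a_strong_rep m n D \<longleftrightarrow>
     (\<forall>i<n. \<forall>j<n. one_a_strong_rep m (D i j) (var i j))"

end

(*
  Let r be the number of prime factors of m and, for a parameter K, put w = K^r and h = w^2.
  Since C(h, w) >= w^w, the rows and columns can be indexed by distinct w-subsets u_1, ..., u_n
  of an h-set. For a prime power q = p^k the truncated alternating binomial sum
  F_q(s) = sum_{a<q} (-1)^a C(s, a) equals 1 at s = 0 and vanishes for 0 < s < q; as the
  binomial coefficients C(s, a), a < q, are q-periodic in s modulo p, F_q(s) is divisible by p
  whenever q does not divide s. Choose for every p | m a power q_p of p with K < q_p <= pK. For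
  i /= k the number s = |u_i - u_k| lies in (0, K^r], and K^r < prod_p q_p, so some q_p does
  not divide s. Gluing the matrices F_(q_p)(|u_i - u_k|)^(e_p) with Chinese remainder
  idempotents therefore yields a 1-a-strong representation of the identity matrix modulo m.
  Its rank is small because F_q(|u_i - u_k|) = sum over |T| < q of (-1)^|T| [T <= u_i]
  [T disjoint from u_k]; taking K least with n <= (K^r)^(K^r) makes the rank
  exp(O(K log K)) = exp(O((log n (log log n)^(r-1))^(1/r))).
*)

theory Submission
  imports Defs "HOL-Analysis.Complex_Transcendental"
begin

section \<open>Factorization rank\<close>

definition rank_le :: "nat \<Rightarrow> ('i \<Rightarrow> 'j \<Rightarrow> 'a::comm_semiring_1) \<Rightarrow> bool" where
  "rank_le t A \<longleftrightarrow> (\<exists>F G. \<forall>i k. A i k = (\<Sum>l<t. F i l * G k l))"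

lemma rank_le_card:
  assumes "finite S"
  shows "rank_le (card S) (\<lambda>i k. \<Sum>x\<in>S. F i x * G k x)"
proof -
  obtain \<phi> where \<phi>: "bij_betw \<phi> {..<card S} S"
    using assms ex_bij_betw_nat_finite lessThan_atLeast0 by metis
  have "(\<Sum>x\<in>S. F i x * G k x) = (\<Sum>l<card S. F i (\<phi> l) * G k (\<phi> l))" for i k
    using sum.reindex_bij_betw[OF \<phi>, of "\<lambda>x. F i x * G k x"] by simp
  then show ?thesis
    unfolding rank_le_def by (intro exI[of _ "\<lambda>i l. F i (\<phi> l)"] exI[of _ "\<lambda>k l. G k (\<phi> l)"]) simp
qed

lemma rank_le_mono:
  assumes "rank_le t A" and "t \<le> t'"
  shows "rank_le t' A"
proof -
  obtain F G where A: "\<And>i k. A i k = (\<Sum>l<t. F i l * G k l)"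
    using assms(1) unfolding rank_le_def by metis
  have "A i k = (\<Sum>l<t'. F i l * (if l < t then G k l else 0))" for i k
    unfolding A using assms(2) by (intro sum.mono_neutral_cong_left) auto
  then show ?thesis
    unfolding rank_le_def by (intro exI[of _ F] exI[of _ "\<lambda>k l. if l < t then G k l else 0"]) simp
qed

lemma rank_le_const: "rank_le 1 (\<lambda>i k. c)"
  using rank_le_card[of "{()}" "\<lambda>_ _. c" "\<lambda>_ _. 1"] by simp

lemma rank_le_zero: "rank_le 0 (\<lambda>i k. 0)"
  unfolding rank_le_def by simp

lemma rank_le_scale:
  assumes "rank_le t A"
  shows "rank_le t (\<lambda>i k. c * A i k)"
proof -
  obtain F G where A: "\<And>i k. A i k = (\<Sum>l<t. F i l * G k l)"
    using assms unfolding rank_le_def by metis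
  have "c * A i k = (\<Sum>l<t. (c * F i l) * G k l)" for i k
    unfolding A by (simp add: sum_distrib_left mult.assoc)
  then show ?thesis
    unfolding rank_le_def by (intro exI[of _ "\<lambda>i l. c * F i l"] exI[of _ G]) simp
qed

lemma rank_le_add:
  assumes "rank_le t A" and "rank_le t' A'"
  shows "rank_le (t + t') (\<lambda>i k. A i k + A' i k)"
proof -
  obtain F G F' G' where
    A: "\<And>i k. A i k = (\<Sum>l<t. F i l * G k l)" and A': "\<And>i k. A' i k = (\<Sum>l<t'. F' i l * G' k l)"
    using assms unfolding rank_le_def by metis
  define S where "S = {..<t} <+> {..<t'}"
  have eq: "(\<lambda>i k. A i k + A' i k) =
      (\<lambda>i k. \<Sum>x\<in>S. case_sum (F i) (F' i) x * case_sum (G k) (G' k) x)"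
    unfolding S_def A A' by (simp add: sum.Plus comp_def)
  have "rank_le (card S) (\<lambda>i k. A i k + A' i k)"
    unfolding eq by (rule rank_le_card) (simp add: S_def)
  moreover have "card S = t + t'"
    unfolding S_def using card_Plus[of "{..<t}" "{..<t'}"] by simp
  ultimately show ?thesis
    by metis
qed

lemma rank_le_mult:
  assumes "rank_le t A" and "rank_le t' A'"
  shows "rank_le (t * t') (\<lambda>i k. A i k * A' i k)"
proof -
  obtain F G F' G' where
    A: "\<And>i k. A i k = (\<Sum>l<t. F i l * G k l)" and A': "\<And>i k. A' i k = (\<Sum>l<t'. F' i l * G' k l)"
    using assms unfolding rank_le_def by metis
  define S where "S = {..<t} \<times> {..<t'}"
  have eq: "(\<lambda>i k. A i k * A' i k) =
      (\<lambda>i k. \<Sum>x\<in>S. (F i (fst x) * F' i (snd x)) * (G k (fst x) * G' k (snd x)))"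
    unfolding S_def A A' sum_product sum.cartesian_product by (simp add: case_prod_beta mult_ac)
  have "rank_le (card S) (\<lambda>i k. A i k * A' i k)"
    unfolding eq by (rule rank_le_card) (simp add: S_def)
  moreover have "card S = t * t'"
    unfolding S_def by (simp add: card_cartesian_product)
  ultimately show ?thesis
    by metis
qed

lemma rank_le_power:
  assumes "rank_le t A"
  shows "rank_le (t ^ e) (\<lambda>i k. A i k ^ e)"
proof (induction e)
  case 0
  show ?case
    using rank_le_const[of 1] by simp
next
  case (Suc e)
  show ?case
    using rank_le_mult[OF assms Suc.IH] by simp
qed

lemma rank_le_sum:
  assumes "finite P" and "\<And>p. p \<in> P \<Longrightarrow> rank_le (t p) (A p)"
  shows "rank_le (\<Sum>p\<in>P. t p) (\<lambda>i k. \<Sum>p\<in>P. A p i k)"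
  using assms by (induction P rule: finite_induct) (simp_all add: rank_le_zero rank_le_add)

section \<open>Truncated alternating binomial sums\<close>

lemma prime_dvd_choose_prime_power:
  assumes "prime p" and "0 < j" and "j < p ^ k"
  shows "p dvd (p ^ k choose j)"
proof (rule ccontr)
  assume "\<not> p dvd (p ^ k choose j)"
  then have "coprime (p ^ k) (p ^ k choose j)"
    using assms(1) by (simp add: prime_imp_coprime coprime_commute)
  moreover have "p ^ k dvd j * (p ^ k choose j)"
    using times_binomial_minus1_eq[OF assms(2), of "p ^ k"] by simp
  ultimately have "p ^ k dvd j"
    using coprime_dvd_mult_left_iff by blast
  with assms(2,3) show False
    by (simp add: nat_dvd_not_less)
qed

lemma choose_add_prime_power_cong:
  assumes "prime p" and "a < p ^ k"
  shows "[(s + p ^ k) choose a = s choose a] (mod p)"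
proof -
  have "(s + p ^ k) choose a = (\<Sum>j\<le>a. (p ^ k choose j) * (s choose (a - j)))"
    using vandermonde[of "p ^ k" s a] by (simp add: add.commute)
  also have "\<dots> = (s choose a) + (\<Sum>j\<in>{1..a}. (p ^ k choose j) * (s choose (a - j)))"
    by (simp add: atMost_atLeast0 sum.atLeast_Suc_atMost)
  also have "[\<dots> = (s choose a) + 0] (mod p)"
    using prime_dvd_choose_prime_power[OF assms(1)] assms(2)
    by (intro cong_add cong_refl) (auto simp: cong_0_iff intro!: dvd_sum)
  finally show ?thesis
    by simp
qed

definition alt_choose_sum :: "nat \<Rightarrow> nat \<Rightarrow> int" where
  "alt_choose_sum q s = (\<Sum>a<q. (-1) ^ a * int (s choose a))"

lemma alt_choose_sum_0:
  assumes "q > 0"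
  shows "alt_choose_sum q 0 = 1"
proof -
  have "alt_choose_sum q 0 = (\<Sum>a\<in>{0}. (-1) ^ a * int (0 choose a))"
    unfolding alt_choose_sum_def using assms by (intro sum.mono_neutral_right) auto
  then show ?thesis
    by simp
qed

lemma alt_choose_sum_eq_0:
  assumes "0 < s" and "s < q"
  shows "alt_choose_sum q s = 0"
proof -
  have "alt_choose_sum q s = (\<Sum>a\<le>s. (-1) ^ a * int (s choose a))"
    unfolding alt_choose_sum_def using assms by (intro sum.mono_neutral_right) auto
  also have "\<dots> = 0"
    using choose_alternating_sum[of s, where 'a = int] assms(1) by simp
  finally show ?thesis .
qed

lemma alt_choose_sum_add_mult_cong:
  assumes "prime p"
  shows "[alt_choose_sum (p ^ k) (s + j * p ^ k) = alt_choose_sum (p ^ k) s] (mod int p)"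
proof (induction j)
  case (Suc j)
  have "[alt_choose_sum (p ^ k) (s + j * p ^ k + p ^ k) = alt_choose_sum (p ^ k) (s + j * p ^ k)]
      (mod int p)"
    unfolding alt_choose_sum_def
    using choose_add_prime_power_cong[OF assms, of _ k "s + j * p ^ k"]
    by (intro cong_sum cong_mult cong_refl) (simp_all flip: cong_int_iff)
  moreover have "s + Suc j * p ^ k = s + j * p ^ k + p ^ k"
    by simp
  ultimately show ?case
    using Suc.IH by (metis cong_trans)
qed simp

lemma prime_dvd_alt_choose_sum:
  assumes "prime p" and "\<not> p ^ k dvd s"
  shows "int p dvd alt_choose_sum (p ^ k) s"
proof -
  have "0 < s mod p ^ k" and "s mod p ^ k < p ^ k"
    using assms by (simp_all add: dvd_eq_mod_eq_0 prime_gt_0_nat)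
  then have "alt_choose_sum (p ^ k) (s mod p ^ k) = 0"
    by (rule alt_choose_sum_eq_0)
  moreover have "[alt_choose_sum (p ^ k) s = alt_choose_sum (p ^ k) (s mod p ^ k)] (mod int p)"
    using alt_choose_sum_add_mult_cong[OF assms(1), of k "s mod p ^ k" "s div p ^ k"]
    by (simp add: mod_div_mult_eq cong_sym)
  ultimately show ?thesis
    by (simp add: cong_0_iff)
qed

lemma alt_choose_sum_card:
  assumes "finite U" and "Y \<subseteq> U"
  shows "alt_choose_sum q (card Y) =
    (\<Sum>T | T \<subseteq> U \<and> card T < q. (-1) ^ card T * (if T \<subseteq> Y then 1 else 0))"
proof -
  have "finite Y"
    using assms finite_subset by blast
  have "(\<Sum>T | T \<subseteq> U \<and> card T < q. (-1) ^ card T * (if T \<subseteq> Y then 1 else 0)) =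
        (\<Sum>T | T \<subseteq> Y \<and> card T < q. (-1::int) ^ card T)"
    using assms by (intro sum.mono_neutral_cong_right) auto
  also have "\<dots> = (\<Sum>a<q. \<Sum>T | T \<subseteq> Y \<and> card T = a. (-1) ^ card T)"
    using \<open>finite Y\<close>
    by (subst sum.group[of "{T. T \<subseteq> Y \<and> card T < q}" "{..<q}" card, symmetric])
      (auto intro!: sum.cong arg_cong[where f = card])
  also have "\<dots> = alt_choose_sum q (card Y)"
    unfolding alt_choose_sum_def using n_subsets[OF \<open>finite Y\<close>] by (simp add: mult.commute)
  finally show ?thesis ..
qed

lemma card_subsets_card_le:
  assumes "finite U"
  shows "card {T. T \<subseteq> U \<and> card T \<le> D} \<le> (card U + 1) ^ D"
proof -
  have "{T. T \<subseteq> U \<and> card T \<le> D} = (\<Union>j\<le>D. {T. T \<subseteq> U \<and> card T = j})"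
    by auto
  also have "card \<dots> = (\<Sum>j\<le>D. card {T. T \<subseteq> U \<and> card T = j})"
    using assms by (intro card_UN_disjoint) (auto intro: finite_subset[of _ "Pow U"])
  finally have "card {T. T \<subseteq> U \<and> card T \<le> D} = (\<Sum>j\<le>D. card U choose j)"
    using assms by (simp add: n_subsets)
  also have "\<dots> \<le> (\<Sum>j\<le>D. (D choose j) * card U ^ j * 1 ^ (D - j))"
  proof (intro sum_mono)
    fix j assume "j \<in> {..D}"
    then have "1 \<le> D choose j"
      by (simp add: Suc_le_eq zero_less_binomial)
    moreover have "card U choose j \<le> card U ^ j"
      by (cases "j \<le> card U") (simp_all add: binomial_le_pow binomial_eq_0)
    ultimately show "card U choose j \<le> (D choose j) * card U ^ j * 1 ^ (D - j)"
      using le_trans mult_le_mono1 by fastforce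
  qed
  also have "\<dots> = (card U + 1) ^ D"
    unfolding binomial[of "card U" 1 D] by simp
  finally show ?thesis .
qed

lemma rank_le_alt_choose_sum_card_diff:
  fixes u :: "'i \<Rightarrow> 'a set"
  assumes "finite U" and "\<And>i. u i \<subseteq> U" and "q \<le> D + 1"
  shows "rank_le ((card U + 1) ^ D) (\<lambda>i k. alt_choose_sum q (card (u i - u k)))"
proof -
  define \<T> where "\<T> = {T. T \<subseteq> U \<and> card T < q}"
  have "finite \<T>"
    unfolding \<T>_def using assms(1) by simp
  have eq: "(\<lambda>i k. alt_choose_sum q (card (u i - u k))) = (\<lambda>i k.
      \<Sum>T\<in>\<T>. ((-1) ^ card T * (if T \<subseteq> u i then 1 else 0)) * (if T \<subseteq> U - u k then 1 else 0))"
  proof (intro ext)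
    fix i k
    have Y: "u i - u k \<subseteq> U"
      using assms(2) by blast
    show "alt_choose_sum q (card (u i - u k)) =
      (\<Sum>T\<in>\<T>. ((-1) ^ card T * (if T \<subseteq> u i then 1 else 0)) * (if T \<subseteq> U - u k then 1 else 0))"
      unfolding alt_choose_sum_card[OF assms(1) Y] \<T>_def using assms(2) by (intro sum.cong) auto
  qed
  have "rank_le (card \<T>) (\<lambda>i k. alt_choose_sum q (card (u i - u k)))"
    unfolding eq by (rule rank_le_card) fact
  moreover have "card \<T> \<le> (card U + 1) ^ D"
  proof -
    have "card \<T> \<le> card {T. T \<subseteq> U \<and> card T \<le> D}"
      unfolding \<T>_def using assms(1,3) by (intro card_mono) auto
    then show ?thesis
      using card_subsets_card_le[OF assms(1), of D] by linarith
  qed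
  ultimately show ?thesis
    by (rule rank_le_mono)
qed

section \<open>Chinese remaindering modulo the prime powers of m\<close>

lemma ppow_dvd: "ppow m p dvd int m"
  unfolding ppow_def int_dvd_int_iff by (rule multiplicity_dvd)

lemma coprime_prime_factor_powers:
  fixes m :: nat
  assumes "p \<in> prime_factors m" and "p' \<in> prime_factors m" and "p \<noteq> p'"
  shows "coprime (p ^ a) (p' ^ b)"
proof -
  have "prime p" and "prime p'"
    using assms(1,2) by (auto dest: in_prime_factors_imp_prime)
  then show ?thesis
    using assms(3) by (simp add: primes_coprime)
qed

lemma coprime_ppow:
  assumes "p \<in> prime_factors m" and "p' \<in> prime_factors m" and "p \<noteq> p'"
  shows "coprime (ppow m p) (ppow m p')"
  unfolding ppow_def coprime_int_iff using assms by (rule coprime_prime_factor_powers)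

lemma cong_of_cong_ppow:
  assumes "m > 0" and "\<And>p. p \<in> prime_factors m \<Longrightarrow> [x = y] (mod ppow m p)"
  shows "[x = y] (mod int m)"
proof -
  have "m = (\<Prod>p\<in>prime_factors m. p ^ multiplicity p m)"
    using prod_prime_factors[of m] assms(1) by simp
  then have "int m = (\<Prod>p\<in>prime_factors m. ppow m p)"
    unfolding ppow_def by (metis of_nat_prod)
  then show ?thesis
    using assms(2) coprime_ppow by (simp add: cong_cong_prod_coprime)
qed

lemma crt_idempotents:
  "\<exists>M. \<forall>p\<in>prime_factors m. \<forall>p'\<in>prime_factors m.
     [M p = (if p = p' then 1 else 0)] (mod ppow m p')"
proof -
  have "\<exists>x::nat. \<forall>p'\<in>prime_factors m.
      [x = (if p = p' then 1 else 0)] (mod p' ^ multiplicity p' m)" for p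
    by (rule chinese_remainder_nat) (simp, blast intro: coprime_prime_factor_powers)
  then obtain x :: "nat \<Rightarrow> nat" where x: "\<And>p. \<forall>p'\<in>prime_factors m.
      [x p = (if p = p' then 1 else 0)] (mod p' ^ multiplicity p' m)"
    by metis
  have x_int: "[int (x p) = int (if p = p' then 1 else 0)] (mod ppow m p')"
    if "p' \<in> prime_factors m" for p p'
    unfolding ppow_def cong_int_iff using x[of p] that by blast
  have "[int (x p) = (if p = p' then 1 else 0)] (mod ppow m p')"
    if "p' \<in> prime_factors m" for p p'
    using x_int[OF that, of p] by (cases "p = p'") simp_all
  then show ?thesis
    by (intro exI[of _ "\<lambda>p. int (x p)"]) blast
qed

lemma sum_idempotents_cong:
  assumes "finite P" and "p0 \<in> P"
    and "\<And>p. p \<in> P \<Longrightarrow> [M p = (if p = p0 then 1 else 0)] (mod \<mu>)"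
  shows "[(\<Sum>p\<in>P. M p * x p) = x p0] (mod \<mu>)"
proof -
  have "[(\<Sum>p\<in>P. M p * x p) = (\<Sum>p\<in>P. (if p = p0 then 1 else 0) * x p)] (mod \<mu>)"
    using assms(3) by (intro cong_sum cong_mult cong_refl) auto
  also have "(\<Sum>p\<in>P. (if p = p0 then 1 else 0) * x p) = (\<Sum>p\<in>P. if p = p0 then x p else 0)"
    by (rule sum.cong) simp_all
  also have "\<dots> = x p0"
    using assms(1,2) by simp
  finally show ?thesis .
qed

lemma prime_power_between:
  fixes p K :: nat
  assumes "prime p" and "K \<ge> 1"
  shows "\<exists>k. K < p ^ k \<and> p ^ k \<le> p * K"
proof -
  obtain k where "p ^ k \<le> K" and "K < p ^ (k + 1)"
    using ex_power_ivl1[of p K] assms prime_ge_2_nat by blast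
  then show ?thesis
    by (intro exI[of _ "k + 1"]) simp
qed

lemma exists_not_dvd_of_prod:
  fixes q :: "'a \<Rightarrow> nat"
  assumes "finite P" and "P \<noteq> {}"
    and "\<And>p p'. p \<in> P \<Longrightarrow> p' \<in> P \<Longrightarrow> p \<noteq> p' \<Longrightarrow> coprime (q p) (q p')"
    and "\<And>p. p \<in> P \<Longrightarrow> K < q p" and "0 < s" and "s \<le> K ^ card P"
  shows "\<exists>p\<in>P. \<not> q p dvd s"
proof (rule ccontr)
  assume "\<not> (\<exists>p\<in>P. \<not> q p dvd s)"
  then have "[s = 0] (mod (\<Prod>p\<in>P. q p))"
    using assms(3) by (intro coprime_cong_prod_nat) (auto simp: cong_0_iff)
  then have "(\<Prod>p\<in>P. q p) \<le> s"
    using assms(5) by (simp add: cong_0_iff dvd_imp_le)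
  moreover have "K ^ card P < (\<Prod>p\<in>P. q p)"
  proof -
    have q_pos: "0 < q p" if "p \<in> P" for p
      using assms(4)[OF that] by linarith
    obtain p where "p \<in> P"
      using assms(2) by blast
    then have "(\<Prod>p\<in>P. K) < (\<Prod>p\<in>P. q p)"
      using assms(1,4) by (intro prod_mono_strict[of p]) (auto intro: less_imp_le q_pos)
    then show ?thesis
      by simp
  qed
  ultimately show False
    using assms(6) by linarith
qed

section \<open>Low-rank strong representations of the identity\<close>

definition strong_rep_identity :: "nat \<Rightarrow> nat \<Rightarrow> (nat \<Rightarrow> nat \<Rightarrow> int) \<Rightarrow> bool" where
  "strong_rep_identity m n A \<longleftrightarrow>
     (\<forall>i<n. [A i i = 1] (mod int m)) \<and>
     (\<forall>i<n. \<forall>k<n. i \<noteq> k \<longrightarrow> (\<exists>p\<in>prime_factors m. [A i k = 0] (mod ppow m p)))"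

lemma multiplicity_le_self:
  fixes m :: nat
  assumes "prime p" and "m > 0"
  shows "multiplicity p m \<le> m"
proof -
  have "multiplicity p m < 2 ^ multiplicity p m"
    by (rule less_exp)
  also have "\<dots> \<le> p ^ multiplicity p m"
    using prime_ge_2_nat[OF assms(1)] by (rule power_mono) simp
  also have "\<dots> \<le> m"
    using assms(2) by (intro dvd_imp_le multiplicity_dvd)
  finally show ?thesis
    by simp
qed

lemma rank_le_crt_combination:
  fixes u :: "'i \<Rightarrow> 'a set"
  assumes "finite U" and "\<And>i. u i \<subseteq> U" and "finite P"
    and "\<And>p. p \<in> P \<Longrightarrow> q p \<le> D + 1" and "\<And>p. p \<in> P \<Longrightarrow> e p \<le> E"
  shows "rank_le (card P * (card U + 1) ^ (D * E))
    (\<lambda>i k. \<Sum>p\<in>P. M p * alt_choose_sum (q p) (card (u i - u k)) ^ e p)"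
proof -
  have "rank_le ((card U + 1) ^ (D * E)) (\<lambda>i k. M p * alt_choose_sum (q p) (card (u i - u k)) ^ e p)"
    if "p \<in> P" for p
  proof -
    have "rank_le (((card U + 1) ^ D) ^ e p) (\<lambda>i k. alt_choose_sum (q p) (card (u i - u k)) ^ e p)"
      using rank_le_alt_choose_sum_card_diff[OF assms(1,2) assms(4)[OF that]] by (rule rank_le_power)
    moreover have "((card U + 1) ^ D) ^ e p \<le> (card U + 1) ^ (D * E)"
      unfolding power_mult[symmetric] using assms(5)[OF that] by (intro power_increasing) simp_all
    ultimately show ?thesis
      by (intro rank_le_scale) (rule rank_le_mono)
  qed
  then have "rank_le (\<Sum>p\<in>P. (card U + 1) ^ (D * E))
      (\<lambda>i k. \<Sum>p\<in>P. M p * alt_choose_sum (q p) (card (u i - u k)) ^ e p)"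
    by (rule rank_le_sum[OF assms(3)])
  then show ?thesis
    by simp
qed

lemma exists_ppow_dvd_alt_choose_sum:
  fixes m :: nat
  assumes "m > 1" and "0 < s" and "s \<le> K ^ card (prime_factors m)"
    and "\<And>p. p \<in> prime_factors m \<Longrightarrow> K < p ^ k p"
  shows "\<exists>p\<in>prime_factors m. ppow m p dvd alt_choose_sum (p ^ k p) s ^ multiplicity p m"
proof -
  have "prime_factors m \<noteq> {}"
    using assms(1) by (simp add: prime_factorization_empty_iff)
  moreover have "coprime (p ^ k p) (p' ^ k p')"
    if "p \<in> prime_factors m" "p' \<in> prime_factors m" "p \<noteq> p'" for p p'
    using that by (rule coprime_prime_factor_powers)
  ultimately have "\<exists>p\<in>prime_factors m. \<not> p ^ k p dvd s"
    using assms(2-4) by (intro exists_not_dvd_of_prod) simp_all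
  then obtain p where p: "p \<in> prime_factors m" and "\<not> p ^ k p dvd s"
    by blast
  then have "int p dvd alt_choose_sum (p ^ k p) s"
    using in_prime_factors_imp_prime[OF p] by (intro prime_dvd_alt_choose_sum)
  then have "ppow m p dvd alt_choose_sum (p ^ k p) s ^ multiplicity p m"
    unfolding ppow_def by (simp add: dvd_power_same)
  then show ?thesis
    using p by blast
qed

lemma strong_rep_identity_crt_combination:
  fixes m :: nat and u :: "nat \<Rightarrow> 'a set"
  assumes "m > 1" and "\<And>i. finite (u i)"
    and antichain: "\<And>i k. i < n \<Longrightarrow> k < n \<Longrightarrow> i \<noteq> k \<Longrightarrow> \<not> u i \<subseteq> u k"
    and card_u: "\<And>i. i < n \<Longrightarrow> card (u i) \<le> K ^ card (prime_factors m)"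
    and k: "\<And>p. p \<in> prime_factors m \<Longrightarrow> K < p ^ k p"
    and M: "\<And>p p'. p \<in> prime_factors m \<Longrightarrow> p' \<in> prime_factors m \<Longrightarrow>
      [M p = (if p = p' then 1 else 0)] (mod ppow m p')"
  shows "strong_rep_identity m n (\<lambda>i j. \<Sum>p\<in>prime_factors m.
    M p * alt_choose_sum (p ^ k p) (card (u i - u j)) ^ multiplicity p m)"
    (is "strong_rep_identity m n ?A")
proof -
  let ?P = "prime_factors m"
  have "[?A i i = 1] (mod int m)" for i
  proof (rule cong_of_cong_ppow)
    fix p0 assume p0: "p0 \<in> ?P"
    have "[(\<Sum>p\<in>?P. M p * 1) = 1] (mod ppow m p0)"
      by (rule sum_idempotents_cong[OF _ p0 M[OF _ p0], where x = "\<lambda>_. 1"]) simp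
    moreover have "alt_choose_sum (p ^ k p) 0 = 1" if "p \<in> ?P" for p
      using in_prime_factors_imp_prime[OF that] by (simp add: alt_choose_sum_0 prime_gt_0_nat)
    then have "?A i i = (\<Sum>p\<in>?P. M p * 1)"
      by (intro sum.cong) simp_all
    ultimately show "[?A i i = 1] (mod ppow m p0)"
      by simp
  qed (use assms(1) in simp)
  moreover have "\<exists>p\<in>?P. [?A i j = 0] (mod ppow m p)" if "i < n" "j < n" "i \<noteq> j" for i j
  proof -
    define s where "s = card (u i - u j)"
    have "u i - u j \<noteq> {}"
      using antichain[OF that] by blast
    then have "0 < s"
      unfolding s_def using assms(2)[of i] by (simp add: card_gt_0_iff)
    have "s \<le> card (u i)"
      unfolding s_def using assms(2) by (rule card_mono) blast
    then have "s \<le> K ^ card ?P"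
      using card_u[OF that(1)] by linarith
    then obtain p0 where p0: "p0 \<in> ?P"
      and "ppow m p0 dvd alt_choose_sum (p0 ^ k p0) s ^ multiplicity p0 m"
      using exists_ppow_dvd_alt_choose_sum[OF assms(1) \<open>0 < s\<close> _ k] by blast
    then have "[alt_choose_sum (p0 ^ k p0) s ^ multiplicity p0 m = 0] (mod ppow m p0)"
      by (simp add: cong_0_iff)
    moreover have "[?A i j = alt_choose_sum (p0 ^ k p0) s ^ multiplicity p0 m] (mod ppow m p0)"
      unfolding s_def by (rule sum_idempotents_cong[OF _ p0 M[OF _ p0]]) simp
    ultimately show ?thesis
      using p0 cong_trans by blast
  qed
  ultimately show ?thesis
    unfolding strong_rep_identity_def by blast
qed

lemma strong_rep_identity_low_rank:
  fixes m :: nat and u :: "nat \<Rightarrow> 'a set"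
  assumes "m > 1" and "K \<ge> 1" and "finite U" and "\<And>i. u i \<subseteq> U"
    and "\<And>i k. i < n \<Longrightarrow> k < n \<Longrightarrow> i \<noteq> k \<Longrightarrow> \<not> u i \<subseteq> u k"
    and "\<And>i. i < n \<Longrightarrow> card (u i) \<le> K ^ card (prime_factors m)"
  shows "\<exists>A. rank_le (card (prime_factors m) * (card U + 1) ^ (m * K * m)) A
    \<and> strong_rep_identity m n A"
proof -
  have prime: "prime p" and le_m: "p \<le> m" if "p \<in> prime_factors m" for p
    using that assms(1) by (auto simp: dvd_imp_le in_prime_factors_iff)
  obtain k where k: "\<And>p. p \<in> prime_factors m \<Longrightarrow> K < p ^ k p \<and> p ^ k p \<le> p * K"
    using prime_power_between[OF prime assms(2)] by metis
  obtain M where M: "\<And>p p'. p \<in> prime_factors m \<Longrightarrow> p' \<in> prime_factors m \<Longrightarrow>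
      [M p = (if p = p' then 1 else 0)] (mod ppow m p')"
    using crt_idempotents[of m] by metis
  have fin: "finite (u i)" for i
    using assms(4) assms(3) by (rule finite_subset)
  have K_less: "K < p ^ k p" if "p \<in> prime_factors m" for p
    using k[OF that] by blast
  have "strong_rep_identity m n (\<lambda>i j. \<Sum>p\<in>prime_factors m.
      M p * alt_choose_sum (p ^ k p) (card (u i - u j)) ^ multiplicity p m)"
    by (rule strong_rep_identity_crt_combination[OF assms(1) fin assms(5,6) K_less M])
  moreover have "rank_le (card (prime_factors m) * (card U + 1) ^ (m * K * m)) (\<lambda>i j.
      \<Sum>p\<in>prime_factors m. M p * alt_choose_sum (p ^ k p) (card (u i - u j)) ^ multiplicity p m)"
  proof (rule rank_le_crt_combination[OF assms(3,4)])
    fix p assume "p \<in> prime_factors m"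
    then show "p ^ k p \<le> m * K + 1"
      using k[of p] mult_le_mono1[OF le_m, of p K] by linarith
    show "multiplicity p m \<le> m"
      using prime[OF \<open>p \<in> prime_factors m\<close>] assms(1) by (intro multiplicity_le_self) simp_all
  qed simp
  ultimately show ?thesis
    by blast
qed

lemma obtain_antichain_of_subsets:
  assumes "finite U" and "n \<le> card U choose w"
  obtains u where "\<And>i. u i \<subseteq> U" and "\<And>i. i < n \<Longrightarrow> card (u i) = w"
    and "\<And>i k. i < n \<Longrightarrow> k < n \<Longrightarrow> i \<noteq> k \<Longrightarrow> \<not> u i \<subseteq> u k"
proof -
  have "n \<le> card {T. T \<subseteq> U \<and> card T = w}"
    using assms by (simp add: n_subsets)
  then obtain \<V> where \<V>: "\<V> \<subseteq> {T. T \<subseteq> U \<and> card T = w}" and "card \<V> = n" and "finite \<V>"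
    by (rule obtain_subset_with_card_n)
  then obtain v where v: "bij_betw v {..<n} \<V>"
    using ex_bij_betw_nat_finite[of \<V>] by (auto simp: atLeast0LessThan)
  define u where "u i = (if i < n then v i else {})" for i
  have "v i \<in> \<V>" if "i < n" for i
    using v that by (auto simp: bij_betw_def)
  then have u_U: "u i \<subseteq> U" and card_u: "i < n \<Longrightarrow> card (u i) = w" for i
    using \<V> by (auto simp: u_def)
  have antichain: "\<not> u i \<subseteq> u k" if "i < n" "k < n" "i \<noteq> k" for i k
  proof
    assume sub: "u i \<subseteq> u k"
    have "finite (u k)"
      using u_U assms(1) by (rule finite_subset)
    then have "u i = u k"
      using sub card_u[OF that(1)] card_u[OF that(2)] by (intro card_subset_eq) simp_all
    then have "v i = v k"
      using that by (simp add: u_def)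
    then have "i = k"
      using inj_onD[OF bij_betw_imp_inj_on[OF v]] that by simp
    then show False
      using that by simp
  qed
  show ?thesis
    by (rule that[OF u_U card_u antichain])
qed

lemma pow_le_choose_square:
  assumes "w \<ge> 1"
  shows "w ^ w \<le> (w * w) choose w"
proof -
  have "real w ^ w \<le> real ((w * w) choose w)"
    using assms binomial_ge_n_over_k_pow_k[of w "w * w", where 'a = real] by simp
  then show ?thesis
    by (simp only: of_nat_le_iff[symmetric] of_nat_power[symmetric])
qed

lemma strong_rep_identity_rank_bound:
  fixes m K n :: nat
  defines "r \<equiv> card (prime_factors m)"
  assumes "m > 1" and "K \<ge> 2" and "n \<le> (K ^ r) ^ (K ^ r)"
  shows "\<exists>A. rank_le (r * K ^ ((2 * r + 1) * m * m * K)) A \<and> strong_rep_identity m n A"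
proof -
  define w where "w = K ^ r"
  define U where "U = {..<w * w}"
  have "w \<ge> 1"
    unfolding w_def using assms(3) by simp
  then have "n \<le> card U choose w"
    using assms(4) pow_le_choose_square[of w] unfolding U_def w_def by simp
  then obtain u where u_U: "\<And>i. u i \<subseteq> U" and card_u: "\<And>i. i < n \<Longrightarrow> card (u i) = w"
    and antichain: "\<And>i k. i < n \<Longrightarrow> k < n \<Longrightarrow> i \<noteq> k \<Longrightarrow> \<not> u i \<subseteq> u k"
    using obtain_antichain_of_subsets[of U n w] unfolding U_def by auto
  have K1: "K \<ge> 1" and fin: "finite U"
    using assms(3) by (simp_all add: U_def)
  have card_le: "card (u i) \<le> K ^ card (prime_factors m)" if "i < n" for i
    using card_u[OF that] unfolding w_def r_def by simp
  have "\<exists>A. rank_le (r * (card U + 1) ^ (m * K * m)) A \<and> strong_rep_identity m n A"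
    unfolding r_def by (rule strong_rep_identity_low_rank[OF assms(2) K1 fin u_U antichain card_le])
  then obtain A where A: "rank_le (r * (card U + 1) ^ (m * K * m)) A" "strong_rep_identity m n A"
    by blast
  have "card U + 1 \<le> K ^ (2 * r + 1)"
  proof -
    have "card U = K ^ (2 * r)"
      unfolding U_def w_def by (simp add: power_mult_distrib power_add[symmetric] mult_2)
    moreover have "K ^ (2 * r) * 2 \<le> K ^ (2 * r) * K"
      using assms(3) by simp
    ultimately show ?thesis
      using assms(3) by (simp add: Suc_le_eq)
  qed
  then have "(card U + 1) ^ (m * K * m) \<le> (K ^ (2 * r + 1)) ^ (m * K * m)"
    by (rule power_mono) simp
  also have "\<dots> = K ^ ((2 * r + 1) * m * m * K)"
    unfolding power_mult[symmetric] by (simp add: algebra_simps)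
  finally have "rank_le (r * K ^ ((2 * r + 1) * m * m * K)) A"
    using A(1) by (elim rank_le_mono) simp
  then show ?thesis
    using A(2) by blast
qed

lemma rank_le_reduce_mod:
  fixes A :: "'i \<Rightarrow> 'j \<Rightarrow> int"
  assumes "rank_le t A" and "m > 0"
  shows "\<exists>F G. (\<forall>i l. F i l \<in> {0..<int m}) \<and> (\<forall>k l. G k l \<in> {0..<int m}) \<and>
    (\<forall>i k. [(\<Sum>l<t. F i l * G k l) = A i k] (mod int m))"
proof -
  obtain F G where A: "\<And>i k. A i k = (\<Sum>l<t. F i l * G k l)"
    using assms(1) unfolding rank_le_def by metis
  have "[(\<Sum>l<t. (F i l mod m) * (G k l mod m)) = A i k] (mod int m)" for i k
    unfolding A by (intro cong_sum cong_mult) (simp_all add: cong_def)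
  then show ?thesis
    using assms(2) by (intro exI[of _ "\<lambda>i l. F i l mod m"] exI[of _ "\<lambda>k l. G k l mod m"]) simp
qed

lemma strong_rep_identity_cong:
  assumes "strong_rep_identity m n A" and "\<And>i k. [A' i k = A i k] (mod int m)"
  shows "strong_rep_identity m n A'"
proof -
  have "[A' i k = A i k] (mod ppow m p)" for i k p
    using assms(2) ppow_dvd by (rule cong_dvd_modulus)
  moreover have "[A' i k = A i k] (mod int m)" for i k
    using assms(2) .
  ultimately show ?thesis
    using assms(1) unfolding strong_rep_identity_def by (blast intro: cong_trans)
qed

section \<open>Choice of the parameter\<close>

lemma one_less_ln:
  assumes "3 \<le> x"
  shows "1 < (ln x :: real)"
proof -
  have "ln 3 \<le> ln x"
    using assms by simp
  then show ?thesis
    using ln3_gt_1 by linarith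
qed

definition root_log_loglog :: "nat \<Rightarrow> real \<Rightarrow> real" where
  "root_log_loglog r x = root r (ln x * ln (ln x) ^ (r - 1))"

lemma root_log_loglog_mono:
  assumes "r \<ge> 1" and "3 \<le> x" and "x \<le> y"
  shows "root_log_loglog r x \<le> root_log_loglog r y"
proof -
  have "1 < ln x"
    using assms(2) by (rule one_less_ln)
  moreover have "ln x \<le> ln y"
    using assms(2,3) by simp
  ultimately have "ln x * ln (ln x) ^ (r - 1) \<le> ln y * ln (ln y) ^ (r - 1)"
    by (intro mult_mono power_mono) auto
  then show ?thesis
    unfolding root_log_loglog_def using assms(1) by simp
qed

lemma root_log_loglog_pos:
  assumes "r \<ge> 1" and "3 \<le> x"
  shows "0 < root_log_loglog r x"
proof -
  have "1 < ln x"
    using assms(2) by (rule one_less_ln)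
  then show ?thesis
    unfolding root_log_loglog_def using assms(1) by simp
qed

lemma mult_ln_le_root_log_loglog:
  assumes "r \<ge> 1" and "3 \<le> a" and "a ^ r * ln a \<le> ln x"
  shows "a * ln a \<le> root_log_loglog r x"
proof -
  have "1 \<le> ln a"
    using one_less_ln[OF assms(2)] by simp
  have "a \<le> a ^ r"
    using assms(1,2) by (simp add: self_le_power)
  also have "\<dots> \<le> a ^ r * ln a"
    using \<open>1 \<le> ln a\<close> assms(2) by simp
  also have "\<dots> \<le> ln x"
    by (rule assms(3))
  finally have "a \<le> ln x" .
  then have "ln a \<le> ln (ln x)"
    using assms(2) by simp
  have "(a * ln a) ^ r = (a ^ r * ln a) * ln a ^ (r - 1)"
    using assms(1) by (simp add: power_mult_distrib mult.assoc flip: power_Suc)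
  also have "\<dots> \<le> ln x * ln (ln x) ^ (r - 1)"
    using assms(2,3) \<open>1 \<le> ln a\<close> \<open>a \<le> ln x\<close> \<open>ln a \<le> ln (ln x)\<close>
    by (intro mult_mono power_mono) auto
  finally have "root r ((a * ln a) ^ r) \<le> root_log_loglog r x"
    unfolding root_log_loglog_def using assms(1) by simp
  then show ?thesis
    using assms(1,2) \<open>1 \<le> ln a\<close> by (simp add: real_root_power_cancel)
qed

lemma mult_ln_le_of_tower_less:
  assumes "r \<ge> 1" and "K \<ge> 4" and "((K - 1) ^ r) ^ ((K - 1) ^ r) < n"
  shows "real K * ln (real K) \<le> 4 * root_log_loglog r n"
proof -
  define a where "a = real K - 1"
  have "3 \<le> a" and K_eq: "real K = a + 1"
    unfolding a_def using assms(2) by simp_all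
  have "real ((K - 1) ^ r) ^ ((K - 1) ^ r) < real n"
    using assms(3) by (simp flip: of_nat_power)
  then have "(a ^ r) ^ (K - 1) ^ r < real n"
    using assms(2) unfolding a_def by (simp add: of_nat_diff)
  moreover have "0 < n"
    using assms(3) by simp
  ultimately have "ln ((a ^ r) ^ (K - 1) ^ r) < ln n"
    using \<open>3 \<le> a\<close> by (subst ln_less_cancel_iff) simp_all
  then have "(K - 1) ^ r * (r * ln a) < ln n"
    using \<open>3 \<le> a\<close> by (simp add: ln_realpow)
  moreover have "a ^ r * ln a \<le> (K - 1) ^ r * (r * ln a)"
    using assms(1,2) \<open>3 \<le> a\<close> unfolding a_def by (simp add: of_nat_diff)
  ultimately have "a * ln a \<le> root_log_loglog r n"
    using mult_ln_le_root_log_loglog[OF assms(1) \<open>3 \<le> a\<close>] by simp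
  moreover have "ln (real K) \<le> 2 * ln a"
  proof -
    have "3 * a \<le> a * a"
      using \<open>3 \<le> a\<close> by (intro mult_right_mono) simp_all
    then have "real K \<le> a ^ 2"
      using K_eq \<open>3 \<le> a\<close> unfolding power2_eq_square by linarith
    then have "ln (real K) \<le> ln (a ^ 2)"
      using assms(2) \<open>3 \<le> a\<close> by (subst ln_le_cancel_iff) simp_all
    also have "\<dots> = 2 * ln a"
      using \<open>3 \<le> a\<close> by (simp add: ln_realpow)
    finally show ?thesis .
  qed
  moreover have "real K \<le> 2 * a" and "0 \<le> ln (real K)"
    using \<open>3 \<le> a\<close> K_eq assms(2) by simp_all
  ultimately have "real K * ln (real K) \<le> (2 * a) * (2 * ln a)"
    by (intro mult_mono) auto
  also have "\<dots> \<le> 4 * root_log_loglog r n"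
    using \<open>a * ln a \<le> root_log_loglog r n\<close> by simp
  finally show ?thesis .
qed

lemma exists_tower_parameter:
  assumes "r \<ge> 1" and "n \<ge> 3"
  shows "\<exists>K\<ge>2. n \<le> (K ^ r) ^ (K ^ r) \<and> real K * ln (real K) \<le> 4 * root_log_loglog r n + 6"
proof -
  define P where "P K \<longleftrightarrow> 2 \<le> K \<and> n \<le> (K ^ r) ^ (K ^ r)" for K :: nat
  have "n \<le> n ^ r" and "n ^ r \<le> (n ^ r) ^ (n ^ r)"
    using assms by (simp_all add: self_le_power)
  then have "P n"
    unfolding P_def using assms(2) by linarith
  then obtain K where "P K" and least: "\<And>K'. K' < K \<Longrightarrow> \<not> P K'"
    using exists_least_iff[of P] by blast
  then have "K \<ge> 2" and "n \<le> (K ^ r) ^ (K ^ r)"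
    unfolding P_def by auto
  moreover have "real K * ln (real K) \<le> 4 * root_log_loglog r n + 6"
  proof (cases "K \<le> 3")
    case True
    have "ln (real K) \<le> real K - 1"
      using \<open>K \<ge> 2\<close> by (intro ln_le_minus_one) simp
    then have "real K * ln (real K) \<le> 3 * 2"
      using True \<open>K \<ge> 2\<close> by (intro mult_mono) auto
    moreover have "0 < root_log_loglog r n"
      using assms by (intro root_log_loglog_pos) simp_all
    ultimately show ?thesis
      by linarith
  next
    case False
    then have "K \<ge> 4" and "\<not> P (K - 1)"
      using least[of "K - 1"] by simp_all
    then have "((K - 1) ^ r) ^ ((K - 1) ^ r) < n"
      unfolding P_def by (auto simp: not_le)
    then have "real K * ln (real K) \<le> 4 * root_log_loglog r n"
      by (rule mult_ln_le_of_tower_less[OF assms(1) \<open>K \<ge> 4\<close>])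
    then show ?thesis
      by linarith
  qed
  ultimately show ?thesis
    by blast
qed

lemma power_le_exp_of_mult_ln:
  fixes a b K :: nat and g g0 :: real
  assumes "a > 0" and "K > 0" and "real K * ln (real K) \<le> 4 * g + 6"
    and "0 < g0" and "g0 \<le> g"
  shows "real (a * K ^ (b * K)) \<le> exp (((ln a + 6 * b) / g0 + 4 * b) * g)"
proof -
  have "real K ^ (b * K) = exp (real (b * K) * ln K)"
    using assms(2) by (subst exp_of_nat_mult) simp
  then have "real (a * K ^ (b * K)) = exp (ln a) * exp (real (b * K) * ln K)"
    using assms(1) by simp
  also have "\<dots> = exp (ln a + real b * (real K * ln K))"
    by (simp add: exp_add[symmetric] mult_ac)
  also have "\<dots> \<le> exp (ln a + 6 * b + 4 * b * g)"
    using mult_left_mono[OF assms(3), of "real b"] by (simp add: algebra_simps)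
  also have "\<dots> \<le> exp (((ln a + 6 * b) / g0 + 4 * b) * g)"
  proof -
    have "1 \<le> g / g0" and "0 \<le> ln a + 6 * b"
      using assms(1,4,5) by simp_all
    then have "(ln a + 6 * b) * 1 \<le> (ln a + 6 * b) * (g / g0)"
      by (rule mult_left_mono)
    then have "ln a + 6 * b \<le> (ln a + 6 * b) / g0 * g"
      by simp
    then show ?thesis
      by (simp add: algebra_simps)
  qed
  finally show ?thesis .
qed

section \<open>The matrix C B^T X\<close>

lemma single_one_eq_iff [simp]:
  "Poly_Mapping.single a (Suc 0) = Poly_Mapping.single b (Suc 0) \<longleftrightarrow> a = b"
  by (metis keys_single one_neq_zero One_nat_def singleton_inject)

lemma one_a_strong_rep_var:
  assumes "prime_factors m \<noteq> {}"
    and "[g (Poly_Mapping.single (i, j) 1) = 1] (mod int m)"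
    and "\<And>I. I \<noteq> Poly_Mapping.single (i, j) 1 \<Longrightarrow> \<exists>p\<in>prime_factors m. [g I = 0] (mod ppow m p)"
  shows "one_a_strong_rep m g (var i j)"
proof -
  have at_var: "[var i j I = g I] (mod ppow m p)" if "I = Poly_Mapping.single (i, j) 1" for I p
  proof -
    have "[g I = 1] (mod ppow m p)"
      using cong_dvd_modulus[OF assms(2) ppow_dvd] unfolding that .
    then show ?thesis
      unfolding that var_def by (simp add: cong_sym)
  qed
  have off_var: "var i j I = 0" if "I \<noteq> Poly_Mapping.single (i, j) 1" for I
    using that unfolding var_def by simp
  show ?thesis
    unfolding one_a_strong_rep_def alt_rep_def
  proof (intro conjI allI impI)
    fix I
    show "\<exists>p\<in>prime_factors m. [var i j I = g I] (mod ppow m p)"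
    proof (cases "I = Poly_Mapping.single (i, j) 1")
      case True
      then show ?thesis
        using assms(1) at_var by blast
    next
      case False
      then obtain p where "p \<in> prime_factors m" and "[g I = 0] (mod ppow m p)"
        using assms(3) by blast
      then show ?thesis
        using off_var[OF False] by (auto intro: cong_sym)
    qed
  next
    fix I
    assume "\<exists>p\<in>prime_factors m. \<not> [var i j I = g I] (mod ppow m p)"
    then show "[var i j I = 0] (mod int m)"
      using at_var off_var by (cases "I = Poly_Mapping.single (i, j) 1") auto
  qed
qed

lemma CBtX_single:
  assumes "k < n"
  shows "CBtX n t C B i j (Poly_Mapping.single (k, j) 1) = (\<Sum>l<t. C i l * B k l)"
proof -
  have "CBtX n t C B i j (Poly_Mapping.single (k, j) 1) =
      (\<Sum>k'<n. if k' = k then (\<Sum>l<t. C i l * B k' l) else 0)"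
    unfolding CBtX_def var_def by (intro sum.cong) auto
  then show ?thesis
    using assms by simp
qed

lemma CBtX_eq_0:
  assumes "\<And>k. k < n \<Longrightarrow> I \<noteq> Poly_Mapping.single (k, j) 1"
  shows "CBtX n t C B i j I = 0"
  unfolding CBtX_def var_def using assms by (intro sum.neutral) auto

lemma matrix_one_a_strong_rep_CBtX:
  assumes "prime_factors m \<noteq> {}" and "strong_rep_identity m n (\<lambda>i k. \<Sum>l<t. C i l * B k l)"
  shows "matrix_one_a_strong_rep m n (CBtX n t C B)"
  unfolding matrix_one_a_strong_rep_def
proof (intro allI impI)
  fix i j assume "i < n" and "j < n"
  show "one_a_strong_rep m (CBtX n t C B i j) (var i j)"
  proof (rule one_a_strong_rep_var[OF assms(1)])
    show "[CBtX n t C B i j (Poly_Mapping.single (i, j) 1) = 1] (mod int m)"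
      unfolding CBtX_single[OF \<open>i < n\<close>] using assms(2) \<open>i < n\<close>
      unfolding strong_rep_identity_def by blast
  next
    fix I :: mono assume I: "I \<noteq> Poly_Mapping.single (i, j) 1"
    show "\<exists>p\<in>prime_factors m. [CBtX n t C B i j I = 0] (mod ppow m p)"
    proof (cases "\<exists>k<n. I = Poly_Mapping.single (k, j) 1")
      case True
      then obtain k where "k < n" and I_eq: "I = Poly_Mapping.single (k, j) 1"
        by blast
      moreover have "i \<noteq> k"
        using I I_eq by blast
      ultimately obtain p where "p \<in> prime_factors m" and "[(\<Sum>l<t. C i l * B k l) = 0] (mod ppow m p)"
        using assms(2) \<open>i < n\<close> unfolding strong_rep_identity_def by blast
      then show ?thesis
        unfolding I_eq CBtX_single[OF \<open>k < n\<close>] by blast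
    next
      case False
      then have "CBtX n t C B i j I = 0"
        by (intro CBtX_eq_0) blast
      moreover obtain p where "p \<in> prime_factors m"
        using assms(1) by blast
      ultimately show ?thesis
        by auto
    qed
  qed
qed

lemma exists_strong_rep_CBtX:
  fixes m K n :: nat
  defines "r \<equiv> card (prime_factors m)"
  defines "t \<equiv> r * K ^ ((2 * r + 1) * m * m * K)"
  assumes "m > 1" and "K \<ge> 2" and "n \<le> (K ^ r) ^ (K ^ r)"
  shows "\<exists>B C. (\<forall>i<n. \<forall>l<t. B i l \<in> {0..<int m} \<and> C i l \<in> {0..<int m}) \<and>
    matrix_one_a_strong_rep m n (CBtX n t C B) \<and>
    (\<forall>i<n. \<exists>coef. \<forall>j<n. \<forall>I. [CBtX n t C B i j I = (\<Sum>k<n. coef k * var k j I)] (mod int m))"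
proof -
  obtain A where "rank_le t A" and "strong_rep_identity m n A"
    using strong_rep_identity_rank_bound[OF assms(3,4)] assms(5) unfolding r_def t_def by blast
  obtain C B where "\<forall>i l. C i l \<in> {0..<int m}" and "\<forall>k l. B k l \<in> {0..<int m}"
    and CB: "\<forall>i k. [(\<Sum>l<t. C i l * B k l) = A i k] (mod int m)"
    using rank_le_reduce_mod[OF \<open>rank_le t A\<close>, of m] assms(3) by (auto simp del: atLeastLessThan_iff)
  moreover have "strong_rep_identity m n (\<lambda>i k. \<Sum>l<t. C i l * B k l)"
    using CB by (intro strong_rep_identity_cong[OF \<open>strong_rep_identity m n A\<close>]) blast
  then have "matrix_one_a_strong_rep m n (CBtX n t C B)"
    using assms(3) by (intro matrix_one_a_strong_rep_CBtX) (simp_all add: prime_factorization_empty_iff)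
  moreover have "\<exists>coef. \<forall>j<n. \<forall>I. [CBtX n t C B i j I = (\<Sum>k<n. coef k * var k j I)] (mod int m)"
    for i
    by (intro exI[of _ "\<lambda>k. \<Sum>l<t. C i l * B k l"]) (simp add: CBtX_def)
  ultimately show ?thesis
    by blast
qed

theorem corollary9:
  fixes m :: nat
  assumes "m > 1" and "card (prime_factors m) \<ge> 2"
  shows "\<exists>c::real. c > 0 \<and>
    (\<forall>n::nat. n \<ge> 3 \<longrightarrow>
      (\<exists>(t::nat) (B::nat \<Rightarrow> nat \<Rightarrow> int) (C::nat \<Rightarrow> nat \<Rightarrow> int).
         (\<forall>i<n. \<forall>l<t. B i l \<in> {0..<int m} \<and> C i l \<in> {0..<int m}) \<and>
         real t \<le> exp (c * root (card (prime_factors m))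
                    (ln (real n) * (ln (ln (real n))) ^ (card (prime_factors m) - 1))) \<and>
         matrix_one_a_strong_rep m n (CBtX n t C B) \<and>
         (\<forall>i<n. \<exists>coef::nat \<Rightarrow> int. \<forall>j<n. \<forall>I.
             [CBtX n t C B i j I = (\<Sum>k<n. coef k * var k j I)] (mod int m))))"
proof -
  define r where "r = card (prime_factors m)"
  define b where "b = (2 * r + 1) * m * m"
  define g0 where "g0 = root_log_loglog r 3"
  define c where "c = (ln r + 6 * b) / g0 + 4 * b"
  have "r \<ge> 1" and "0 < g0"
    using assms(2) root_log_loglog_pos[of r 3] unfolding r_def g0_def by simp_all
  then have "c > 0"
    unfolding c_def using assms(1) by (simp add: b_def add_nonneg_pos)
  moreover have "\<exists>t B C. (\<forall>i<n. \<forall>l<t. B i l \<in> {0..<int m} \<and> C i l \<in> {0..<int m}) \<and>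
      real t \<le> exp (c * root_log_loglog r n) \<and> matrix_one_a_strong_rep m n (CBtX n t C B) \<and>
      (\<forall>i<n. \<exists>coef. \<forall>j<n. \<forall>I. [CBtX n t C B i j I = (\<Sum>k<n. coef k * var k j I)] (mod int m))"
    if n3: "n \<ge> 3" for n
  proof -
    obtain K where "K \<ge> 2" and "n \<le> (K ^ r) ^ (K ^ r)"
      and "real K * ln (real K) \<le> 4 * root_log_loglog r n + 6"
      using exists_tower_parameter[OF \<open>r \<ge> 1\<close> n3] by blast
    moreover have "root_log_loglog r 3 \<le> root_log_loglog r n"
      using \<open>r \<ge> 1\<close> n3 by (intro root_log_loglog_mono) simp_all
    ultimately have "real (r * K ^ (b * K)) \<le> exp (c * root_log_loglog r n)"
      unfolding c_def g0_def using \<open>r \<ge> 1\<close> \<open>0 < g0\<close>[unfolded g0_def]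
      by (intro power_le_exp_of_mult_ln) simp_all
    then show ?thesis
      using exists_strong_rep_CBtX[OF assms(1) \<open>K \<ge> 2\<close>] \<open>n \<le> (K ^ r) ^ (K ^ r)\<close>
      unfolding r_def b_def by blast
  qed
  ultimately show ?thesis
    unfolding root_log_loglog_def r_def by blast
qed

end
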